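(* Let $n\geqslant 1$ be an integer and let $I_\nu$ denote the modified Bessel function of the first kind of order $\nu$. Then for every $\kappa>0$, \[ J(\kappa):=2 I_{n-1}(\kappa)I_{n+1}(\kappa) -I_n(\kappa)^2+ \frac{4 n }{\kappa}I_{n-1}(\kappa )I_n(\kappa) - I_{n-1}(\kappa)^2\geqslant 0. \]
   Context: For $\nu\in\mathbb Z$ and $\zeta\in\mathbb C$, $I_\nu(\zeta)=\sum_{k\geqslant 0}\frac{(\zeta/2)^{2k+\nu}}{k!\,\Gamma(k+\nu+1)}$ (with $I_{-\nu}=I_\nu$ for integer $\nu$). *)

theory Defs
  imports "HOL-Analysis.Analysis"
begin

text \<open>For integer order nu, I_nu(z) = sum_k (z/2)^(2k+nu) / (k! Gamma(k+nu+1)), and I_{-nu} = I_nu.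
For nonnegative integer m, Gamma(k+m+1) = (k+m)!.\<close>

definition besselI :: "int \<Rightarrow> real \<Rightarrow> real" where
  "besselI \<nu> z = (let m = nat \<bar>\<nu>\<bar> in
     (\<Sum>k. (z / 2) ^ (2 * k + m) / (fact k * fact (k + m))))"

end

theory Submission
  imports Defs
begin

text \<open>
  With \<open>A = I\<^sub>n\<^sub>-\<^sub>1(\<kappa>)\<close> and \<open>B = I\<^sub>n(\<kappa>)\<close>, the three-term recurrence
  \<open>\<kappa> I\<^sub>n\<^sub>+\<^sub>1 = \<kappa> I\<^sub>n\<^sub>-\<^sub>1 - 2n I\<^sub>n\<close> eliminates \<open>I\<^sub>n\<^sub>+\<^sub>1\<close> and turns \<open>J(\<kappa>)\<close> into \<open>A\<^sup>2 - B\<^sup>2\<close>,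
  so it suffices that \<open>|I\<^sub>n| \<le> |I\<^sub>n\<^sub>-\<^sub>1|\<close>. Both squares are Cauchy products of power series
  in \<open>\<kappa>/2\<close> whose coefficient products are nonnegative (all exponents involved are even), and
  each coefficient of \<open>I\<^sub>n\<^sup>2\<close> is dominated by the coefficient of \<open>I\<^sub>n\<^sub>-\<^sub>1\<^sup>2\<close> at the same power:
  pairing the terms \<open>(i, j)\<close> of the former with \<open>(i+1, j)\<close> and \<open>(i, j+1)\<close> of the latter reduces
  this to \<open>2 \<le> (q+m)/p + (p+m)/q\<close> with \<open>p = i+1\<close>, \<open>q = j+1\<close>, \<open>m = n-1\<close>, i.e. to AM-GM.
\<close>

definition bessel_term :: "nat \<Rightarrow> real \<Rightarrow> nat \<Rightarrow> real" where
  "bessel_term m t k = t ^ (2 * k + m) / (fact k * fact (k + m))"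

lemma bessel_term_Suc_order: "(real (k + m) + 1) * bessel_term (Suc m) t k = t * bessel_term m t k"
proof -
  have "fact (k + Suc m) = (real (k + m) + 1) * (fact (k + m) :: real)"
    by simp
  moreover have "real (k + m) + 1 > 0"
    by linarith
  ultimately show ?thesis
    by (simp add: bessel_term_def ac_simps)
qed

lemma bessel_term_Suc_index: "(real k + 1) * bessel_term m t (Suc k) = t * bessel_term (Suc m) t k"
proof -
  have "fact (Suc k) = (real k + 1) * (fact k :: real)" "Suc k + m = k + Suc m"
    by simp_all
  moreover have "real k + 1 > 0"
    by linarith
  ultimately show ?thesis
    by (simp add: bessel_term_def ac_simps)
qed

lemma bessel_term_recurrence:
  "t * bessel_term m t (Suc k) = t * bessel_term (m + 2) t k + real (Suc m) * bessel_term (Suc m) t (Suc k)"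
proof -
  have "(real k + 1) * (t * bessel_term m t (Suc k)) = t * (t * bessel_term (Suc m) t k)"
    by (simp add: bessel_term_Suc_index)
  also have "\<dots> = t * ((real (k + Suc m) + 1) * bessel_term (m + 2) t k)"
    using bessel_term_Suc_order [of k "Suc m" t] by simp
  also have "\<dots> = (real k + 1) * (t * bessel_term (m + 2) t k)
                  + real (Suc m) * (t * bessel_term (Suc (Suc m)) t k)"
    by (simp add: algebra_simps)
  also have "\<dots> = (real k + 1) * (t * bessel_term (m + 2) t k + real (Suc m) * bessel_term (Suc m) t (Suc k))"
    using bessel_term_Suc_index [of k "Suc m" t] by (simp add: algebra_simps)
  finally show ?thesis
    by (simp add: mult_left_cancel)
qed

lemma bessel_term_recurrence_0: "t * bessel_term m t 0 = real (Suc m) * bessel_term (Suc m) t 0"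
  using bessel_term_Suc_order [of 0 m t] by (simp add: add.commute)

lemma bessel_term_mult_nonneg: "bessel_term m t i * bessel_term m t j \<ge> 0"
proof -
  have "t ^ (2 * i + m) * t ^ (2 * j + m) = (t\<^sup>2) ^ (i + j + m)"
    by (simp add: power_add [symmetric] power_mult [symmetric] algebra_simps)
  then show ?thesis
    by (simp add: bessel_term_def)
qed

lemma summable_norm_bessel_term: "summable (\<lambda>k. norm (bessel_term m t k))"
proof (rule summable_comparison_test)
  show "summable (\<lambda>k. \<bar>t\<bar> ^ m * (inverse (fact k) * (t\<^sup>2) ^ k))"
    by (intro summable_mult summable_exp)
  have "norm (norm (bessel_term m t k)) \<le> \<bar>t\<bar> ^ m * (inverse (fact k) * (t\<^sup>2) ^ k)" for k
  proof -
    have "norm (norm (bessel_term m t k)) = \<bar>t\<bar> ^ m * (t\<^sup>2) ^ k / (fact k * fact (k + m))"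
      by (simp add: bessel_term_def abs_mult power_abs power_add power_mult)
    also have "\<dots> \<le> \<bar>t\<bar> ^ m * (t\<^sup>2) ^ k / (fact k * 1)"
      by (intro divide_left_mono mult_left_mono) auto
    finally show ?thesis
      by (simp add: divide_inverse mult_ac)
  qed
  then show "\<exists>N. \<forall>k\<ge>N. norm (norm (bessel_term m t k)) \<le> \<bar>t\<bar> ^ m * (inverse (fact k) * (t\<^sup>2) ^ k)"
    by blast
qed

lemma besselI_of_nat: "besselI (int m) z = (\<Sum>k. bessel_term m (z / 2) k)"
  by (simp add: besselI_def bessel_term_def)

lemma besselI_recurrence:
  "z * besselI (int m) z = z * besselI (int m + 2) z + 2 * real (Suc m) * besselI (int m + 1) z"
proof -
  define t where "t = z / 2"
  define b where "b j = bessel_term j t" for j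
  have summable: "summable (b j)" for j
    unfolding b_def using summable_norm_bessel_term summable_norm_cancel by blast
  have "(\<lambda>k. t * b (m + 2) k + real (Suc m) * b (Suc m) (Suc k))
          sums (t * suminf (b (m + 2)) + real (Suc m) * (suminf (b (Suc m)) - b (Suc m) 0))"
    using summable by (intro sums_add sums_mult) (simp_all add: summable_sums sums_Suc_iff)
  then have "(\<lambda>k. t * b m (Suc k))
          sums (t * suminf (b (m + 2)) + real (Suc m) * (suminf (b (Suc m)) - b (Suc m) 0))"
    by (simp add: b_def bessel_term_recurrence)
  then have "(\<lambda>k. t * b m k) sums (t * suminf (b (m + 2))
                + real (Suc m) * (suminf (b (Suc m)) - b (Suc m) 0) + t * b m 0)"
    by (subst sums_Suc_iff [symmetric])
  then have "(\<lambda>k. t * b m k) sums (t * suminf (b (m + 2)) + real (Suc m) * suminf (b (Suc m)))"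
    by (simp add: b_def bessel_term_recurrence_0 algebra_simps)
  moreover have "(\<lambda>k. t * b m k) sums (t * suminf (b m))"
    using summable by (intro sums_mult summable_sums)
  ultimately have "t * suminf (b m) = t * suminf (b (m + 2)) + real (Suc m) * suminf (b (Suc m))"
    using sums_unique2 by blast
  moreover have "besselI (int m + 2) z = suminf (b (m + 2))" "besselI (int m + 1) z = suminf (b (Suc m))"
    using besselI_of_nat [of "m + 2" z] besselI_of_nat [of "Suc m" z] by (simp_all add: b_def t_def add.commute)
  ultimately show ?thesis
    by (simp add: besselI_of_nat b_def t_def algebra_simps)
qed

lemma power2_suminf_le_by_convolution:
  fixes a b :: "nat \<Rightarrow> real"
  assumes "summable (\<lambda>k. norm (a k))" and "summable (\<lambda>k. norm (b k))"
    and "\<And>k. (\<Sum>i\<le>k. b i * b (k - i)) \<le> (\<Sum>i\<le>Suc k. a i * a (Suc k - i))"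
  shows "(suminf b)\<^sup>2 \<le> (suminf a)\<^sup>2"
proof -
  define A where "A k = (\<Sum>i\<le>k. a i * a (k - i))" for k
  define B where "B k = (\<Sum>i\<le>k. b i * b (k - i))" for k
  have "A sums (suminf a)\<^sup>2" and B: "B sums (suminf b)\<^sup>2"
    unfolding A_def B_def
    using Cauchy_product_sums [OF assms(1,1)] Cauchy_product_sums [OF assms(2,2)]
    by (simp_all add: power2_eq_square)
  then have "(\<lambda>k. A (Suc k)) sums ((suminf a)\<^sup>2 - A 0)"
    by (subst sums_Suc_iff) simp
  with B have "(suminf b)\<^sup>2 \<le> (suminf a)\<^sup>2 - A 0"
    by (rule sums_le [rotated]) (unfold A_def B_def, rule assms(3))
  moreover have "A 0 \<ge> 0"
    by (simp add: A_def)
  ultimately show ?thesis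
    by linarith
qed

lemma bessel_term_pair_le:
  "2 * (bessel_term (Suc m) t i * bessel_term (Suc m) t j)
     \<le> bessel_term m t (Suc i) * bessel_term m t j + bessel_term m t i * bessel_term m t (Suc j)"
proof -
  define c where "c = bessel_term (Suc m) t i * bessel_term (Suc m) t j"
  define p where "p = real i + 1"
  define q where "q = real j + 1"
  have p_times: "p * (bessel_term m t (Suc i) * bessel_term m t j) = (q + m) * c"
  proof -
    have "p * (bessel_term m t (Suc i) * bessel_term m t j) = bessel_term (Suc m) t i * (t * bessel_term m t j)"
      by (simp only: p_def mult.assoc [symmetric] bessel_term_Suc_index) (simp add: ac_simps)
    also have "\<dots> = (q + m) * c"
      by (simp only: bessel_term_Suc_order [symmetric]) (simp add: c_def q_def algebra_simps)
    finally show ?thesis .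
  qed
  have q_times: "q * (bessel_term m t i * bessel_term m t (Suc j)) = (p + m) * c"
  proof -
    have "q * (bessel_term m t i * bessel_term m t (Suc j)) = bessel_term (Suc m) t j * (t * bessel_term m t i)"
      by (simp only: q_def mult.left_commute [of _ "bessel_term m t i"] bessel_term_Suc_index) (simp add: ac_simps)
    also have "\<dots> = (p + m) * c"
      by (simp only: bessel_term_Suc_order [symmetric]) (simp add: c_def p_def algebra_simps)
    finally show ?thesis .
  qed
  have "p \<ge> 0" "q \<ge> 0"
    by (simp_all add: p_def q_def)
  have "2 * (p * q) \<le> q * q + p * p"
    using zero_le_power2 [of "p - q"] by (simp add: power2_eq_square algebra_simps)
  also have "\<dots> \<le> q * (q + m) + p * (p + m)"
    using \<open>p \<ge> 0\<close> \<open>q \<ge> 0\<close> by (simp add: algebra_simps)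
  finally have "2 * (p * q) \<le> q * (q + m) + p * (p + m)" .
  then have "p * q * (2 * c) \<le> (q * (q + m) + p * (p + m)) * c"
    using mult_right_mono bessel_term_mult_nonneg [of "Suc m" t i j] unfolding c_def [symmetric]
    by (metis mult.commute mult.left_commute)
  also have "\<dots> = q * (p * (bessel_term m t (Suc i) * bessel_term m t j))
                  + p * (q * (bessel_term m t i * bessel_term m t (Suc j)))"
    unfolding p_times q_times by (simp add: algebra_simps)
  also have "\<dots> = p * q * (bessel_term m t (Suc i) * bessel_term m t j + bessel_term m t i * bessel_term m t (Suc j))"
    by (simp add: algebra_simps)
  finally show ?thesis
    unfolding c_def p_def q_def by (simp add: mult_le_cancel_left_pos)
qed

lemma bessel_term_convolution_le:
  "(\<Sum>i\<le>k. bessel_term (Suc m) t i * bessel_term (Suc m) t (k - i))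
     \<le> (\<Sum>i\<le>Suc k. bessel_term m t i * bessel_term m t (Suc k - i))"
  (is "?B \<le> ?A")
proof -
  let ?b = "bessel_term m t"
  have shift_left: "(\<Sum>i\<le>k. ?b (Suc i) * ?b (k - i)) \<le> ?A"
    using bessel_term_mult_nonneg [of m t 0 "Suc k"] unfolding sum.atMost_Suc_shift [of _ k] by simp
  have shift_right: "(\<Sum>i\<le>k. ?b i * ?b (Suc (k - i))) \<le> ?A"
    using bessel_term_mult_nonneg [of m t "Suc k" 0] by (simp add: Suc_diff_le)
  have "2 * ?B \<le> (\<Sum>i\<le>k. ?b (Suc i) * ?b (k - i) + ?b i * ?b (Suc (k - i)))"
    unfolding sum_distrib_left by (intro sum_mono bessel_term_pair_le)
  also have "\<dots> \<le> 2 * ?A"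
    using shift_left shift_right by (simp add: sum.distrib)
  finally show ?thesis
    by simp
qed

lemma abs_besselI_Suc_le: "\<bar>besselI (int m + 1) z\<bar> \<le> \<bar>besselI (int m) z\<bar>"
proof -
  have "(\<Sum>k. bessel_term (Suc m) (z / 2) k)\<^sup>2 \<le> (\<Sum>k. bessel_term m (z / 2) k)\<^sup>2"
    by (intro power2_suminf_le_by_convolution summable_norm_bessel_term bessel_term_convolution_le)
  moreover have "int m + 1 = int (Suc m)"
    by simp
  ultimately show ?thesis
    by (simp only: abs_le_square_iff besselI_of_nat)
qed

theorem lemmaA1:
  fixes n :: nat and \<kappa> :: real
  assumes "n \<ge> 1" and "\<kappa> > 0"
  shows "2 * besselI (int n - 1) \<kappa> * besselI (int n + 1) \<kappa> - (besselI (int n) \<kappa>)^2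
         + (4 * real n / \<kappa>) * besselI (int n - 1) \<kappa> * besselI (int n) \<kappa>
         - (besselI (int n - 1) \<kappa>)^2 \<ge> 0"
proof -
  obtain m where n: "n = Suc m"
    using assms(1) by (cases n) auto
  define A where "A = besselI (int m) \<kappa>"
  define B where "B = besselI (int m + 1) \<kappa>"
  define c where "c = 2 * real n / \<kappa>"
  have "besselI (int m + 2) \<kappa> = A - c * B"
    using besselI_recurrence [of \<kappa> m] assms(2) unfolding A_def B_def c_def n
    by (simp add: field_simps)
  then have I: "besselI (int n - 1) \<kappa> = A" "besselI (int n) \<kappa> = B" "besselI (int n + 1) \<kappa> = A - c * B"
    by (simp_all add: A_def B_def n ac_simps)
  have "4 * real n / \<kappa> = 2 * c"
    by (simp add: c_def)
  moreover have "B\<^sup>2 \<le> A\<^sup>2"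
    using abs_besselI_Suc_le [of m \<kappa>] unfolding A_def B_def by (simp add: abs_le_square_iff)
  ultimately show ?thesis
    unfolding I by (simp add: algebra_simps power2_eq_square)
qed

end
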